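(* For every $N\ge 2$ and every $x\in\{0,1,\dots,N-2\}$, $$|2p(x)-1|\le\frac{1}{(N-x-2)!}.$$
   Context: For $\sigma\in\mathcal{S}_N$, $\eta_1(\sigma)$ is the number of fixed points and $\eta_2(\sigma)$ the number of 2-cycles of $\sigma$; $\nu$ is the uniform measure on $\mathcal{S}_N$, and for $x\in\{0,\dots,N\}\setminus\{N-1\}$, $p(x)=\mathbb{E}_\nu[\eta_2\mid\eta_1=x]$. *)

theory Defs
  imports "HOL-Probability.Probability" "HOL-Combinatorics.Permutations"
begin

definition perms :: "nat \<Rightarrow> (nat \<Rightarrow> nat) set" where
  "perms N = {\<sigma>. \<sigma> permutes {..<N}}"

definition eta1 :: "nat \<Rightarrow> (nat \<Rightarrow> nat) \<Rightarrow> nat" where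
  "eta1 N \<sigma> = card {i \<in> {..<N}. \<sigma> i = i}"

definition eta2 :: "nat \<Rightarrow> (nat \<Rightarrow> nat) \<Rightarrow> nat" where
  "eta2 N \<sigma> = card {{i, \<sigma> i} | i. i \<in> {..<N} \<and> \<sigma> i \<noteq> i \<and> \<sigma> (\<sigma> i) = i}"

definition nu :: "nat \<Rightarrow> (nat \<Rightarrow> nat) pmf" where
  "nu N = pmf_of_set (perms N)"

text \<open>p(x) = E_nu[eta2 | eta1 = x].\<close>
definition pcond :: "nat \<Rightarrow> nat \<Rightarrow> real" where
  "pcond N x = measure_pmf.expectation (cond_pmf (nu N) {\<sigma>. eta1 N \<sigma> = x}) (\<lambda>\<sigma>. real (eta2 N \<sigma>))"

end

theory Submission
  imports Defs "HOL-Computational_Algebra.Formal_Power_Series"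
begin

text \<open>Write \<open>m = N - x\<close> and \<open>D\<^sub>n\<close> for the number of derangements of an \<open>n\<close>-set.
  Conditioned on its fixed-point set, a uniform permutation is a uniform derangement of the
  remaining \<open>m\<close> points, and double counting 2-cycles gives
  \<open>p(x) = C(m,2) D\<^sub>m\<^sub>-\<^sub>2 / D\<^sub>m\<close>. The recurrence \<open>D\<^sub>n\<^sub>+\<^sub>1 = (n+1) D\<^sub>n + (-1)\<^sup>n\<^sup>+\<^sup>1\<close>,
  applied twice, yields \<open>m(m-1) D\<^sub>m\<^sub>-\<^sub>2 - D\<^sub>m = \<plusminus>(m-1)\<close>, so
  \<open>|2p(x) - 1| = (m-1)/D\<^sub>m\<close>, and \<open>D\<^sub>m \<ge> (m-1)!\<close> finishes the bound.\<close>

definition derangements :: "'a set \<Rightarrow> ('a \<Rightarrow> 'a) set" where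
  "derangements S = {\<pi>. \<pi> permutes S \<and> (\<forall>x\<in>S. \<pi> x \<noteq> x)}"

definition derangement_number :: "nat \<Rightarrow> nat" where
  "derangement_number n = card (derangements {..<n})"

lemma finite_derangements: "finite S \<Longrightarrow> finite (derangements S)"
  unfolding derangements_def
  by (rule finite_subset[OF _ finite_permutations[of S]]) auto

lemma card_derangements:
  assumes "finite S"
  shows "card (derangements S) = derangement_number (card S)"
proof -
  obtain h where "bij_betw h {..<card S} S"
    using ex_bij_betw_nat_finite[OF assms] by (auto simp: atLeast0LessThan)
  from bij_betw_derangements[OF this] show ?thesis
    unfolding derangement_number_def derangements_def by (simp add: bij_betw_same_card)
qed

lemma permutes_with_fixpoints_eq_derangements:
  assumes "F \<subseteq> U"
  shows "{\<sigma>. \<sigma> permutes U \<and> {i\<in>U. \<sigma> i = i} = F} = derangements (U - F)"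
proof (intro set_eqI iffI)
  fix \<sigma> assume "\<sigma> \<in> {\<sigma>. \<sigma> permutes U \<and> {i\<in>U. \<sigma> i = i} = F}"
  then have p: "\<sigma> permutes U" and F: "{i\<in>U. \<sigma> i = i} = F" by auto
  have "\<sigma> permutes (U - F)"
    by (rule permutes_superset[OF p]) (use F in auto)
  with F show "\<sigma> \<in> derangements (U - F)" unfolding derangements_def by auto
next
  fix \<sigma> assume "\<sigma> \<in> derangements (U - F)"
  then have p: "\<sigma> permutes (U - F)" and d: "\<forall>x\<in>U-F. \<sigma> x \<noteq> x"
    unfolding derangements_def by auto
  have "\<sigma> permutes U" by (rule permutes_subset[OF p]) auto
  moreover have "{i\<in>U. \<sigma> i = i} = F"
    using d assms permutes_not_in[OF p] by auto
  ultimately show "\<sigma> \<in> {\<sigma>. \<sigma> permutes U \<and> {i\<in>U. \<sigma> i = i} = F}" by auto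
qed

lemma sum_permutes_with_card_fixpoints:
  assumes "finite U"
  shows "(\<Sum>\<sigma>\<in>{\<sigma>. \<sigma> permutes U \<and> card {i\<in>U. \<sigma> i = i} = k}. g \<sigma>)
       = (\<Sum>F\<in>{F. F \<subseteq> U \<and> card F = k}. \<Sum>\<sigma>\<in>derangements (U - F). g \<sigma>)"
proof -
  have "{\<sigma>. \<sigma> permutes U \<and> card {i\<in>U. \<sigma> i = i} = k}
      = (\<Union>F\<in>{F. F \<subseteq> U \<and> card F = k}. {\<sigma>. \<sigma> permutes U \<and> {i\<in>U. \<sigma> i = i} = F})"
    by auto
  also have "\<dots> = (\<Union>F\<in>{F. F \<subseteq> U \<and> card F = k}. derangements (U - F))"
    using permutes_with_fixpoints_eq_derangements by (intro SUP_cong) auto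
  finally have partition: "{\<sigma>. \<sigma> permutes U \<and> card {i\<in>U. \<sigma> i = i} = k} = \<dots>" .
  have disjoint: "derangements (U - F) \<inter> derangements (U - G) = {}"
    if "F \<subseteq> U" "G \<subseteq> U" "F \<noteq> G" for F G
    using permutes_with_fixpoints_eq_derangements[OF that(1)]
      permutes_with_fixpoints_eq_derangements[OF that(2)] that(3) by blast
  show ?thesis
    unfolding partition
    by (rule sum.UNION_disjoint) (use assms in \<open>auto simp: finite_derangements disjoint\<close>)
qed

lemma card_permutes_with_card_fixpoints:
  assumes "finite U"
  shows "card {\<sigma>. \<sigma> permutes U \<and> card {i\<in>U. \<sigma> i = i} = k}
       = (card U choose k) * derangement_number (card U - k)"
proof -
  have "card {\<sigma>. \<sigma> permutes U \<and> card {i\<in>U. \<sigma> i = i} = k}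
      = (\<Sum>F\<in>{F. F \<subseteq> U \<and> card F = k}. card (derangements (U - F)))"
    using sum_permutes_with_card_fixpoints[OF assms, where k = k and g = "\<lambda>_. 1::nat"] by simp
  also have "\<dots> = (\<Sum>F\<in>{F. F \<subseteq> U \<and> card F = k}. derangement_number (card U - k))"
    using assms by (intro sum.cong) (auto simp: card_derangements card_Diff_subset finite_subset)
  finally show ?thesis
    using n_subsets[OF assms] by simp
qed

subsection \<open>The derangement numbers\<close>

lemma fact_eq_sum_derangement_number:
  "fact n = (\<Sum>k\<le>n. (n choose k) * derangement_number (n - k))"
proof -
  have "{\<sigma>. \<sigma> permutes {..<n}}
      = (\<Union>k\<le>n. {\<sigma>. \<sigma> permutes {..<n} \<and> card {i\<in>{..<n}. \<sigma> i = i} = k})"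
    using card_mono[of "{..<n}" "{i\<in>{..<n}. _ i = i}"] by auto
  then have "card {\<sigma>. \<sigma> permutes {..<n}}
      = (\<Sum>k\<le>n. card {\<sigma>. \<sigma> permutes {..<n} \<and> card {i\<in>{..<n}. \<sigma> i = i} = k})"
    by (auto intro!: card_UN_disjoint finite_subset[OF _ finite_permutations[of "{..<n}"]])
  then show ?thesis
    using card_permutes_with_card_fixpoints[of "{..<n}"] by (simp add: card_permutations)
qed

text \<open>Binomial inversion of the previous identity, carried out with exponential generating
  functions: \<open>e\<^sup>x\<close> times the EGF of the derangement numbers is \<open>1/(1-x)\<close>.\<close>

lemma derangement_number_eq:
  "real (derangement_number n) = fact n * (\<Sum>i\<le>n. (-1)^i / fact i)"
proof -
  define A :: "real fps" where "A = Abs_fps (\<lambda>n. real (derangement_number n) / fact n)"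
  have "fps_exp 1 * A = Abs_fps (\<lambda>_. 1)"
  proof (rule fps_ext)
    fix n
    have "fps_nth (fps_exp 1 * A) n
        = (\<Sum>i\<le>n. real (n choose i) * real (derangement_number (n - i))) / fact n"
      by (simp add: fps_mult_nth A_def atLeast0AtMost sum_divide_distrib binomial_fact)
    also have "\<dots> = 1"
    proof -
      have "(\<Sum>i\<le>n. real (n choose i) * real (derangement_number (n - i))) = fact n"
        using arg_cong[OF fact_eq_sum_derangement_number[of n], of real] by simp
      then show ?thesis by simp
    qed
    finally show "fps_nth (fps_exp 1 * A) n = fps_nth (Abs_fps (\<lambda>_. 1::real)) n" by simp
  qed
  moreover have "fps_exp (-1) * (fps_exp 1 * A) = A"
    by (simp add: mult.assoc[symmetric] fps_exp_add_mult[symmetric])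
  ultimately have "A = fps_exp (-1) * Abs_fps (\<lambda>_. 1)"
    by metis
  then have "real (derangement_number n) / fact n = (\<Sum>i\<le>n. (-1)^i / fact i)"
    by (simp add: A_def fps_mult_nth atLeast0AtMost fps_eq_iff)
  then show ?thesis by (simp add: field_simps)
qed

lemma derangement_number_Suc:
  "real (derangement_number (Suc n)) = real (Suc n) * real (derangement_number n) + (-1)^Suc n"
  by (simp only: derangement_number_eq sum.atMost_Suc distrib_left) simp

lemma fact_le_derangement_number: "fact (Suc k) \<le> real (derangement_number (Suc (Suc k)))"
proof (induction k)
  case 0
  show ?case
    using derangement_number_Suc[of 1] derangement_number_Suc[of 0]
    by (simp add: derangement_number_def derangements_def)
next
  case (Suc k)
  have "fact (Suc (Suc k)) + fact (Suc k) = real (Suc (Suc (Suc k))) * (fact (Suc k) :: real)"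
    by (simp add: algebra_simps)
  also have "\<dots> \<le> real (Suc (Suc (Suc k))) * real (derangement_number (Suc (Suc k)))"
    using Suc.IH by (intro mult_left_mono) auto
  also have "\<dots> \<le> real (derangement_number (Suc (Suc (Suc k)))) + 1"
    using derangement_number_Suc[of "Suc (Suc k)"] by (cases "even k") auto
  finally show ?case using fact_ge_1[of "Suc k", where 'a=real] by linarith
qed

lemma derangement_number_ratio_bound:
  "\<bar>real (Suc (Suc k) * Suc k * derangement_number k) / derangement_number (Suc (Suc k)) - 1\<bar>
     \<le> 1 / fact k"
proof -
  let ?D = "\<lambda>n. real (derangement_number n)"
  have lower: "real (Suc k) * fact k \<le> ?D (Suc (Suc k))"
    using fact_le_derangement_number[of k] by simp
  have pos: "?D (Suc (Suc k)) > 0"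
    by (rule less_le_trans[OF _ lower]) simp
  have "real (Suc (Suc k) * Suc k) * ?D k - ?D (Suc (Suc k)) = (-1)^k * real (Suc k)"
    by (simp add: derangement_number_Suc algebra_simps)
  then have "real (Suc (Suc k) * Suc k * derangement_number k) / ?D (Suc (Suc k)) - 1
      = (-1)^k * real (Suc k) / ?D (Suc (Suc k))"
    using pos by (simp add: field_simps)
  then have "\<bar>real (Suc (Suc k) * Suc k * derangement_number k) / ?D (Suc (Suc k)) - 1\<bar>
      = real (Suc k) / ?D (Suc (Suc k))"
    by (simp add: abs_mult abs_divide)
  also have "\<dots> \<le> 1 / fact k"
    using lower pos by (simp add: field_simps)
  finally show ?thesis .
qed

subsection \<open>Counting 2-cycles\<close>

definition two_cycles :: "'a set \<Rightarrow> ('a \<Rightarrow> 'a) \<Rightarrow> 'a set set" where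
  "two_cycles U \<sigma> = {{i, \<sigma> i} | i. i \<in> U \<and> \<sigma> i \<noteq> i \<and> \<sigma> (\<sigma> i) = i}"

lemma eta2_eq_card_two_cycles: "eta2 N \<sigma> = card (two_cycles {..<N} \<sigma>)"
  unfolding eta2_def two_cycles_def by simp

lemma two_cycles_subset:
  assumes "\<sigma> permutes S"
  shows "two_cycles U \<sigma> \<subseteq> {e. e \<subseteq> S \<and> card e = 2}"
proof
  fix e assume "e \<in> two_cycles U \<sigma>"
  then obtain i where e: "e = {i, \<sigma> i}" and moved: "\<sigma> i \<noteq> i"
    unfolding two_cycles_def by auto
  have "i \<in> S" using permutes_not_in[OF assms] moved by blast
  with e moved permutes_in_image[OF assms] show "e \<in> {e. e \<subseteq> S \<and> card e = 2}" by auto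
qed

lemma doubleton_in_two_cycles_iff:
  assumes "a \<in> U" "a \<noteq> b"
  shows "{a, b} \<in> two_cycles U \<sigma> \<longleftrightarrow> \<sigma> a = b \<and> \<sigma> b = a"
  using assms unfolding two_cycles_def by (auto simp: doubleton_eq_iff)

text \<open>Composing with the transposition of \<open>a\<close> and \<open>b\<close> removes the 2-cycle \<open>(a b)\<close>.\<close>

lemma card_derangements_swapping:
  assumes "finite S" "a \<noteq> b" "a \<in> S" "b \<in> S"
  shows "card {\<sigma> \<in> derangements S. \<sigma> a = b \<and> \<sigma> b = a} = derangement_number (card S - 2)"
proof -
  let ?f = "\<lambda>\<sigma>. Transposition.transpose a b \<circ> \<sigma>"
  have involution: "?f (?f \<sigma>) = \<sigma>" for \<sigma> by (auto simp: fun_eq_iff)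
  have "?f \<sigma> \<in> derangements (S - {a, b})" if "\<sigma> \<in> derangements S" "\<sigma> a = b" "\<sigma> b = a" for \<sigma>
  proof -
    have p: "\<sigma> permutes S" and moved: "\<forall>x\<in>S. \<sigma> x \<noteq> x"
      using that(1) unfolding derangements_def by auto
    have "?f \<sigma> permutes S"
      by (rule permutes_compose[OF p permutes_swap_id]) (use assms in auto)
    then have "?f \<sigma> permutes (S - {a, b})"
      by (rule permutes_superset) (use that in \<open>auto simp: transpose_def\<close>)
    moreover have "\<sigma> x \<noteq> a" "\<sigma> x \<noteq> b" if "x \<in> S - {a, b}" for x
      using that \<open>\<sigma> a = b\<close> \<open>\<sigma> b = a\<close> permutes_inj[OF p] by (metis DiffD2 injD insertCI)+
    ultimately show ?thesis
      using moved unfolding derangements_def by (auto simp: transpose_def)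
  qed
  moreover have "?f \<tau> \<in> derangements S \<and> ?f \<tau> a = b \<and> ?f \<tau> b = a"
    if "\<tau> \<in> derangements (S - {a, b})" for \<tau>
  proof -
    have p: "\<tau> permutes (S - {a, b})" and moved: "\<forall>x\<in>S - {a, b}. \<tau> x \<noteq> x"
      using that unfolding derangements_def by auto
    have fixed: "\<tau> a = a" "\<tau> b = b" using permutes_not_in[OF p] by auto
    have "\<tau> permutes S" by (rule permutes_subset[OF p]) auto
    then have "?f \<tau> permutes S"
      by (rule permutes_compose[OF _ permutes_swap_id]) (use assms in auto)
    moreover have "?f \<tau> x \<noteq> x" if "x \<in> S" for x
      using that fixed moved assms(2) permutes_in_image[OF p, of x]
      by (cases "x \<in> {a, b}") (auto simp: transpose_def)
    ultimately show ?thesis using fixed unfolding derangements_def by auto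
  qed
  ultimately have "bij_betw ?f {\<sigma> \<in> derangements S. \<sigma> a = b \<and> \<sigma> b = a} (derangements (S - {a, b}))"
    by (intro bij_betw_byWitness[where f' = ?f]) (auto simp: involution)
  then have "card {\<sigma> \<in> derangements S. \<sigma> a = b \<and> \<sigma> b = a} = card (derangements (S - {a, b}))"
    by (rule bij_betw_same_card)
  also have "\<dots> = derangement_number (card S - 2)"
    using assms by (simp add: card_derangements numeral_2_eq_2)
  finally show ?thesis .
qed

lemma sum_card_filter_commute:
  assumes "finite A" "finite B"
  shows "(\<Sum>x\<in>A. card {y\<in>B. P x y}) = (\<Sum>y\<in>B. card {x\<in>A. P x y})"
  using assms by (simp add: card_eq_sum sum.inter_filter sum.swap[of _ A] del: sum_constant)

text \<open>Double counting over the pairs \<open>e \<subseteq> S\<close>: each is a 2-cycle of exactly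
  \<open>D\<^sub>|\<^sub>S\<^sub>|\<^sub>-\<^sub>2\<close> derangements of \<open>S\<close>.\<close>

lemma sum_card_two_cycles_derangements:
  assumes "finite S" "S \<subseteq> U"
  shows "(\<Sum>\<sigma>\<in>derangements S. card (two_cycles U \<sigma>))
       = (card S choose 2) * derangement_number (card S - 2)"
proof -
  define E where "E = {e. e \<subseteq> S \<and> card e = 2}"
  have "finite E" unfolding E_def using assms(1) by simp
  have "(\<Sum>\<sigma>\<in>derangements S. card (two_cycles U \<sigma>))
      = (\<Sum>\<sigma>\<in>derangements S. card {e\<in>E. e \<in> two_cycles U \<sigma>})"
    using two_cycles_subset unfolding E_def derangements_def
    by (intro sum.cong refl arg_cong[where f = card]) blast
  also have "\<dots> = (\<Sum>e\<in>E. card {\<sigma>\<in>derangements S. e \<in> two_cycles U \<sigma>})"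
    using finite_derangements[OF assms(1)] \<open>finite E\<close> by (rule sum_card_filter_commute)
  also have "\<dots> = (\<Sum>e\<in>E. derangement_number (card S - 2))"
  proof (rule sum.cong[OF refl])
    fix e assume "e \<in> E"
    then obtain a b where e: "e = {a, b}" "a \<noteq> b" "a \<in> S" "b \<in> S"
      unfolding E_def by (auto simp: card_2_iff)
    then show "card {\<sigma>\<in>derangements S. e \<in> two_cycles U \<sigma>} = derangement_number (card S - 2)"
      using doubleton_in_two_cycles_iff[of a U b] card_derangements_swapping[OF assms(1) e(2-4)] assms(2)
      by auto
  qed
  finally show ?thesis
    using n_subsets[OF assms(1)] unfolding E_def by simp
qed

lemma cond_pmf_of_set:
  assumes "finite A" "A \<inter> B \<noteq> {}"
  shows "cond_pmf (pmf_of_set A) B = pmf_of_set (A \<inter> B)"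
proof (rule pmf_eqI)
  fix \<sigma>
  have "A \<noteq> {}" using assms(2) by blast
  then have "set_pmf (pmf_of_set A) \<inter> B \<noteq> {}" using assms by simp
  then show "pmf (cond_pmf (pmf_of_set A) B) \<sigma> = pmf (pmf_of_set (A \<inter> B)) \<sigma>"
    using assms \<open>A \<noteq> {}\<close>
    by (auto simp: pmf_cond measure_pmf_of_set indicator_def Int_def card_gt_0_iff)
qed

lemma pcond_eq:
  assumes "x + 2 \<le> N"
  shows "pcond N x
       = real (((N - x) choose 2) * derangement_number (N - x - 2)) / derangement_number (N - x)"
proof -
  define L where "L = {\<sigma>. \<sigma> permutes {..<N} \<and> card {i\<in>{..<N}. \<sigma> i = i} = x}"
  have L_eq: "perms N \<inter> {\<sigma>. eta1 N \<sigma> = x} = L"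
    unfolding L_def perms_def eta1_def by auto
  have "fact (N - x - 1) \<le> real (derangement_number (N - x))"
    using fact_le_derangement_number[of "N - x - 2"] assms by (simp add: Suc_diff_Suc)
  then have "derangement_number (N - x) > 0"
    using fact_ge_1[of "N - x - 1", where 'a = real] by linarith
  moreover have card_L: "card L = (N choose x) * derangement_number (N - x)"
    unfolding L_def using card_permutes_with_card_fixpoints[of "{..<N}" x] by simp
  ultimately have "card L > 0" using assms by simp
  then have "L \<noteq> {}" "finite L" using card_gt_0_iff by blast+
  have "(\<Sum>\<sigma>\<in>L. eta2 N \<sigma>)
      = (\<Sum>F\<in>{F. F \<subseteq> {..<N} \<and> card F = x}. \<Sum>\<sigma>\<in>derangements ({..<N} - F). eta2 N \<sigma>)"
    unfolding L_def by (rule sum_permutes_with_card_fixpoints) simp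
  also have "\<dots> = (\<Sum>F\<in>{F. F \<subseteq> {..<N} \<and> card F = x}.
                     ((N - x) choose 2) * derangement_number (N - x - 2))"
    using sum_card_two_cycles_derangements[of "{..<N} - _" "{..<N}"]
    by (intro sum.cong) (auto simp: eta2_eq_card_two_cycles card_Diff_subset finite_subset)
  finally have sum_L: "(\<Sum>\<sigma>\<in>L. eta2 N \<sigma>)
      = (N choose x) * (((N - x) choose 2) * derangement_number (N - x - 2))"
    using n_subsets[of "{..<N}" x] by simp
  have "pcond N x = (\<Sum>\<sigma>\<in>L. real (eta2 N \<sigma>)) / card L"
    using \<open>L \<noteq> {}\<close> \<open>finite L\<close> L_eq
    by (simp add: pcond_def nu_def perms_def cond_pmf_of_set finite_permutations
                  integral_pmf_of_set)
  also have "\<dots> = real ((N choose x) * (((N - x) choose 2) * derangement_number (N - x - 2)))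
                  / real ((N choose x) * derangement_number (N - x))"
    by (simp only: card_L sum_L flip: of_nat_sum)
  finally show ?thesis
    using assms by simp
qed

theorem proposition4p1:
  fixes N x :: nat
  assumes "N \<ge> 2" and "x \<le> N - 2"
  shows "\<bar>2 * pcond N x - 1\<bar> \<le> 1 / fact (N - x - 2)"
proof -
  define k where "k = N - x - 2"
  then have k: "N - x = Suc (Suc k)" using assms by arith
  have "2 * pcond N x
      = real (2 * ((N - x) choose 2) * derangement_number k) / derangement_number (Suc (Suc k))"
    using assms k by (simp add: pcond_eq)
  also have "2 * ((N - x) choose 2) = Suc (Suc k) * Suc k"
    unfolding k choose_two by simp
  finally have "2 * pcond N x
      = real (Suc (Suc k) * Suc k * derangement_number k) / derangement_number (Suc (Suc k))" .
  then show ?thesis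
    using derangement_number_ratio_bound[of k] k by simp
qed

end
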